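(* Let $N\ge1$ and let $x=(x_1,\dots,x_{2N})\in(\mathbb{R}_{>0})^{2N}$ satisfy the highest weight condition. Then Algorithm I and Algorithm II, both started from $x^{(1)}=x$, stop after the same number $u$ of steps and produce the same sequence of pairs $(\mu^{(i)},\nu^{(i)})_{1\le i\le u}$.
   Context: Highest weight condition: a sequence $x_1,\dots,x_{2n}$ of nonnegative reals satisfies it if $\sum_{i=1}^k(x_{2i-1}-x_{2i})\ge0$ for all $1\le k\le n$. Algorithm I. Set $N^{(1)}=N$, $x^{(1)}=x$. Given $x^{(i)}=(x^{(i)}_1,\dots,x^{(i)}_{2N^{(i)}})$ of positive reals satisfying the highest weight condition: let $\mu^{(i)}=\min_j x^{(i)}_j$ and $y^{(i)}_j=x^{(i)}_j-\mu^{(i)}$. In the (linear, non-cyclic) array $y^{(i)}_1,\dots,y^{(i)}_{2N^{(i)}}$ consider the maximal runs of consecutive zeros (a lone zero counts as a run); say there are $k^{(i)}$ runs with lengths $n^{(i)}_1,\dots,n^{(i)}_{k^{(i)}}$. Let $N^{(i+1)}=N^{(i)}-\sum_{j}\lceil n^{(i)}_j/2\rceil$ and $\nu^{(i)}=N^{(i)}-N^{(i+1)}$. If $N^{(i+1)}=0$, stop and set $u=i$. Otherwise form $x^{(i+1)}$ from $y^{(i)}$: (a) if a run of zeros is at the left end, delete it; (b) for every run of zeros lying between positive entries $a,b$, delete the zeros if the run length is even, and if odd delete the zeros and also replace $a,b$ by the single entry $a+b$; (c) if a run of zeros is at the right end, preceded by a positive entry $a$, delete the zeros, and if its length is odd also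 delete $a$ and add $a$ to the first entry of the resulting array. Repeat with $x^{(i+1)}$. Algorithm II is identical to Algorithm I except that step (c) is replaced by: (c') if a run of zeros is at the right end, preceded by a positive entry $a$, delete the zeros, and if its length is odd also delete $a$ (without adding it anywhere). *)

theory Defs
  imports Complex_Main
begin

text \<open>Highest weight condition for a list x_1..x_{2n} (0-indexed here):
  for all 1 <= k <= n, sum_{i<k} (x_{2i+1} - x_{2i+2}) >= 0, and all entries nonnegative.\<close>
definition highest_weight :: "real list \<Rightarrow> bool" where
  "highest_weight xs \<longleftrightarrow> (\<forall>a\<in>set xs. a \<ge> 0) \<and>
     (\<forall>k\<in>{1..length xs div 2}. (\<Sum>i<k. xs ! (2*i) - xs ! (2*i+1)) \<ge> 0)"

text \<open>Lengths of the maximal runs of consecutive zeros (linear, left to right);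
  the first argument is the length of the currently open run.\<close>
fun zr :: "nat \<Rightarrow> real list \<Rightarrow> nat list" where
  "zr c [] = (if c > 0 then [c] else [])"
| "zr c (a # xs) = (if a = 0 then zr (Suc c) xs
                    else if c > 0 then c # zr 0 xs else zr 0 xs)"

definition zero_runs :: "real list \<Rightarrow> nat list" where
  "zero_runs ys = zr 0 ys"

definition alg_mu :: "real list \<Rightarrow> real" where
  "alg_mu xs = Min (set xs)"

definition alg_y :: "real list \<Rightarrow> real list" where
  "alg_y xs = map (\<lambda>a. a - alg_mu xs) xs"

definition alg_newN :: "nat \<Rightarrow> real list \<Rightarrow> nat" where
  "alg_newN N xs = N - sum_list (map (\<lambda>n. (n + 1) div 2) (zero_runs (alg_y xs)))"

definition alg_nu :: "nat \<Rightarrow> real list \<Rightarrow> nat" where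
  "alg_nu N xs = N - alg_newN N xs"

text \<open>State: (output reversed,
  length of the currently open zero run, whether a positive entry has been seen).
  Leading zeros are deleted (a); an interior run of zeros is deleted, and if its length
  is odd the entries on both sides are replaced by their sum (b).\<close>
definition scan_step :: "real list \<times> nat \<times> bool \<Rightarrow> real \<Rightarrow> real list \<times> nat \<times> bool" where
  "scan_step s e = (case s of (out, z, st) \<Rightarrow>
     if e = 0 then (if st then (out, Suc z, True) else ([], 0, False))
     else if \<not> st then ([e], 0, True)
     else if odd z then ((hd out + e) # tl out, 0, True)
     else (e # out, 0, True))"

text \<open>Step (c) / (c'): a trailing zero run is deleted; if its length is odd, the entry a
  preceding it is deleted too, and (Algorithm I, addback = True) a is added to the
  first entry of the resulting array; (Algorithm II, addback = False) a is discarded.\<close>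
definition alg_next :: "bool \<Rightarrow> real list \<Rightarrow> real list" where
  "alg_next addback xs = (case foldl scan_step ([], 0, False) (alg_y xs) of (out, z, st) \<Rightarrow>
     if odd z then
       (let a = hd out; rest = rev (tl out) in
        if addback \<and> rest \<noteq> [] then (hd rest + a) # tl rest else rest)
     else rev out)"

definition alg_step :: "bool \<Rightarrow> nat \<times> real list \<Rightarrow> nat \<times> real list" where
  "alg_step addback s = (case s of (N, xs) \<Rightarrow> (alg_newN N xs, alg_next addback xs))"

text \<open>alg_state addback x k = (N^{(k+1)}, x^{(k+1)}), started from (N, x) with 2N = length x.
  addback = True is Algorithm I, addback = False is Algorithm II.\<close>
definition alg_state :: "bool \<Rightarrow> real list \<Rightarrow> nat \<Rightarrow> nat \<times> real list" where
  "alg_state addback x k = (alg_step addback ^^ k) (length x div 2, x)"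

definition alg_mu_seq :: "bool \<Rightarrow> real list \<Rightarrow> nat \<Rightarrow> real" where
  "alg_mu_seq addback x i = alg_mu (snd (alg_state addback x (i - 1)))"

definition alg_nu_seq :: "bool \<Rightarrow> real list \<Rightarrow> nat \<Rightarrow> nat" where
  "alg_nu_seq addback x i = (case alg_state addback x (i - 1) of (N, xs) \<Rightarrow> alg_nu N xs)"

definition alg_stops_at :: "bool \<Rightarrow> real list \<Rightarrow> nat \<Rightarrow> bool" where
  "alg_stops_at addback x u \<longleftrightarrow> u \<ge> 1 \<and>
     (\<forall>i\<in>{1..<u}. fst (alg_state addback x i) \<noteq> 0) \<and> fst (alg_state addback x u) = 0"

end

theory Submission
  imports Defs
begin

text \<open>Run both algorithms in lockstep. The invariant is that the array of Algorithm I agrees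
  with the array of Algorithm II except for its first entry, which is larger by some
  \<open>d \<ge> 0\<close>, and that the array of Algorithm II satisfies the highest weight condition, i.e.
  all its even-length prefixes have nonnegative alternating sum.

  Since \<open>x\<^sub>1 \<ge> x\<^sub>2\<close>, raising \<open>x\<^sub>1\<close> does not change the minimum \<open>\<mu>\<close>. Raising the first entry of
  \<open>y\<close> changes the zero runs only if \<open>y\<close> starts with zeros; that leading run has even length
  \<open>n\<close> by the highest weight condition, and in Algorithm I it becomes an interior run of odd
  length \<open>n - 1\<close>, which costs the same \<open>\<lceil>n/2\<rceil>\<close> and merges \<open>d\<close> into the next entry. From then on
  both scans proceed identically, except that step (c) adds a nonnegative entry to the front
  where (c') discards it, so \<open>\<nu>\<close> agrees and the invariant persists. The highest weight
  condition survives a step of Algorithm II because every prefix alternating sum of the new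
  array is a prefix alternating sum of \<open>y\<close> after its even leading zero run, and those are
  nonnegative: the even ones equal those of the old array, as the shift by \<open>\<mu>\<close> cancels, and
  the odd ones add an entry of \<open>y \<ge> 0\<close>.\<close>

lemma Min_set_Cons_Cons:
  fixes a b :: "'a::linorder"
  assumes "b \<le> a"
  shows "Min (set (a # b # t)) = Min (set (b # t))"
proof -
  have "Min (set (b # t)) \<le> a" using assms by (meson Min_le finite_set list.set_intros(1) order_trans)
  then show ?thesis by (metis List.finite_set Min_insert list.simps(15) min.absorb2 set_empty2 list.distinct(1))
qed

lemma length_ge_2_if_even:
  "xs \<noteq> [] \<Longrightarrow> even (length xs) \<Longrightarrow> length xs \<ge> 2"
  by (cases xs) (auto simp: Suc_le_eq odd_pos)

subsection \<open>Alternating sums\<close>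

fun alt_sum :: "real list \<Rightarrow> real" where
  "alt_sum [] = 0"
| "alt_sum (a # l) = a - alt_sum l"

lemma alt_sum_append:
  "alt_sum (l @ r) = alt_sum l + (if even (length l) then alt_sum r else - alt_sum r)"
  by (induction l) auto

lemma alt_sum_replicate_zero [simp]: "alt_sum (replicate n 0) = 0"
  by (induction n) auto

lemma alt_sum_map_minus:
  "alt_sum (map (\<lambda>a. a - c) l) = alt_sum l - (if even (length l) then 0 else c)"
  by (induction l) auto

lemma alt_sum_take_double:
  "2 * k \<le> length x \<Longrightarrow> alt_sum (take (2 * k) x) = (\<Sum>i<k. x ! (2 * i) - x ! (2 * i + 1))"
proof (induction k)
  case (Suc k)
  then have "take (2 * Suc k) x = take (2 * k) x @ [x ! (2 * k), x ! (2 * k + 1)]"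
    by (simp add: take_Suc_conv_app_nth)
  then show ?case using Suc by (simp add: alt_sum_append)
qed simp

definition even_prefixes_nonneg :: "real list \<Rightarrow> bool" where
  "even_prefixes_nonneg xs \<longleftrightarrow> (\<forall>m. even m \<longrightarrow> m \<le> length xs \<longrightarrow> alt_sum (take m xs) \<ge> 0)"

definition prefixes_nonneg :: "real list \<Rightarrow> bool" where
  "prefixes_nonneg xs \<longleftrightarrow> (\<forall>m\<le>length xs. alt_sum (take m xs) \<ge> 0)"

lemma even_prefixes_nonneg_if_highest_weight:
  assumes "highest_weight x"
  shows "even_prefixes_nonneg x"
  unfolding even_prefixes_nonneg_def
proof (intro allI impI)
  fix m assume "even m" "m \<le> length x"
  then obtain k where "m = 2 * k" "2 * k \<le> length x" by blast
  then show "alt_sum (take m x) \<ge> 0"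
    using assms alt_sum_take_double[of k x] by (cases "k = 0") (auto simp: highest_weight_def)
qed

lemma even_prefixes_nonneg_Cons_Cons:
  "even_prefixes_nonneg (a # b # t) \<Longrightarrow> b \<le> a"
  unfolding even_prefixes_nonneg_def by (drule spec[of _ 2]) (simp add: numeral_2_eq_2)

lemma alg_y_nonneg: "xs \<noteq> [] \<Longrightarrow> \<forall>v\<in>set (alg_y xs). v \<ge> 0"
  unfolding alg_y_def alg_mu_def by auto

lemma zero_in_alg_y: "xs \<noteq> [] \<Longrightarrow> 0 \<in> set (alg_y xs)"
  unfolding alg_y_def alg_mu_def by (auto intro: image_eqI[OF _ Min_in])

lemma prefixes_nonneg_alg_y:
  assumes "xs \<noteq> []" "even_prefixes_nonneg xs"
  shows "prefixes_nonneg (alg_y xs)"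
  unfolding prefixes_nonneg_def
proof (intro allI impI)
  fix m assume m: "m \<le> length (alg_y xs)"
  let ?y = "alg_y xs"
  have even_case: "alt_sum (take m' ?y) \<ge> 0" if "even m'" "m' \<le> length ?y" for m'
  proof -
    have "alt_sum (take m' ?y) = alt_sum (take m' xs)"
      using that by (simp add: alg_y_def take_map alt_sum_map_minus)
    then show ?thesis using assms(2) that unfolding even_prefixes_nonneg_def alg_y_def by simp
  qed
  show "alt_sum (take m ?y) \<ge> 0"
  proof (cases "even m")
    case False
    then obtain m' where m': "m = Suc m'" "even m'" by (cases m) auto
    then have "alt_sum (take m ?y) = alt_sum (take m' ?y) + ?y ! m'"
      using m by (simp add: take_Suc_conv_app_nth alt_sum_append)
    moreover have "?y ! m' \<ge> 0" using alg_y_nonneg[OF assms(1)] m m' by simp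
    ultimately show ?thesis using even_case[of m'] m m' by simp
  qed (use even_case m in simp)
qed

lemma split_leading_zeros: "\<exists>n r. ys = replicate n (0::real) @ r \<and> (r = [] \<or> hd r \<noteq> 0)"
proof -
  let ?t = "takeWhile (\<lambda>v. v = 0) ys" and ?d = "dropWhile (\<lambda>v. v = 0) ys"
  have "replicate (length ?t) 0 = ?t"
    by (rule replicate_length_same) (auto dest: set_takeWhileD)
  then have "ys = replicate (length ?t) 0 @ ?d" by simp
  moreover have "?d = [] \<or> hd ?d \<noteq> 0" using hd_dropWhile by blast
  ultimately show ?thesis by blast
qed

lemma leading_zero_run_even:
  assumes "prefixes_nonneg (replicate n 0 @ e # r)" "e > 0"
  shows "even n"
proof (rule ccontr)
  assume "odd n"
  then have "alt_sum (take (n + 1) (replicate n 0 @ e # r)) = - e"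
    by (simp add: alt_sum_append)
  moreover have "n + 1 \<le> length (replicate n 0 @ e # r)" by simp
  then have "alt_sum (take (n + 1) (replicate n 0 @ e # r)) \<ge> 0"
    using assms(1) unfolding prefixes_nonneg_def by blast
  ultimately show False using assms(2) by simp
qed

lemma alg_y_cases:
  assumes "xs \<noteq> []" "even (length xs)" "even_prefixes_nonneg xs"
  obtains (all_zero) n where "even n" "n > 0" "alg_y xs = replicate n 0"
  | (leading) n e r where "even n" "e > 0" "\<forall>v\<in>set r. v \<ge> 0" "alg_y xs = replicate n 0 @ e # r"
proof -
  obtain n r where y: "alg_y xs = replicate n 0 @ r" and r: "r = [] \<or> hd r \<noteq> 0"
    using split_leading_zeros by blast
  have nonneg: "\<forall>v\<in>set (alg_y xs). v \<ge> 0" using alg_y_nonneg[OF assms(1)] .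
  show thesis
  proof (cases r)
    case Nil
    then have "n = length xs" using arg_cong[OF y, of length] by (simp add: alg_y_def)
    then show thesis using all_zero[of n] assms(1,2) y Nil by simp
  next
    case (Cons e r')
    then have "e \<ge> 0" "e \<noteq> 0" "\<forall>v\<in>set r'. v \<ge> 0" using r nonneg y by auto
    moreover have "even n"
      using leading_zero_run_even[of n e r'] prefixes_nonneg_alg_y[OF assms(1,3)] y Cons
        \<open>e \<ge> 0\<close> \<open>e \<noteq> 0\<close> by simp
    ultimately show thesis using leading[of n e r'] y Cons by simp
  qed
qed

subsection \<open>Zero runs and the scan\<close>

definition ceil_half_sum :: "nat list \<Rightarrow> nat" where
  "ceil_half_sum ns = sum_list (map (\<lambda>n. (n + 1) div 2) ns)"

lemma alg_newN_eq: "alg_newN N xs = N - ceil_half_sum (zero_runs (alg_y xs))"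
  unfolding alg_newN_def ceil_half_sum_def by simp

lemma zr_replicate_zero: "zr c (replicate k 0 @ r) = zr (c + k) r"
  by (induction k arbitrary: c) auto

lemma ceil_half_sum_zr_pos: "0 \<in> set ys \<or> c > 0 \<Longrightarrow> ceil_half_sum (zr c ys) \<ge> 1"
  by (induction ys arbitrary: c) (auto simp: ceil_half_sum_def)

lemma alg_newN_le:
  assumes "xs \<noteq> []"
  shows "alg_newN N xs \<le> N - 1"
proof -
  have "ceil_half_sum (zero_runs (alg_y xs)) \<ge> 1"
    unfolding zero_runs_def using ceil_half_sum_zr_pos zero_in_alg_y[OF assms] by blast
  then show ?thesis by (simp add: alg_newN_eq)
qed

lemma ceil_half_sum_zero_runs_all_zero:
  "even n \<Longrightarrow> n > 0 \<Longrightarrow> ceil_half_sum (zero_runs (replicate n 0)) = n div 2"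
  using zr_replicate_zero[of 0 n "[]"] by (simp add: zero_runs_def ceil_half_sum_def)

lemma ceil_half_sum_zero_runs_leading:
  "even n \<Longrightarrow> e \<noteq> 0 \<Longrightarrow>
   ceil_half_sum (zero_runs (replicate n 0 @ e # r)) = n div 2 + ceil_half_sum (zr 0 r)"
  using zr_replicate_zero[of 0 n "e # r"]
  by (cases "n = 0") (simp_all add: zero_runs_def ceil_half_sum_def)

definition scan_finish :: "bool \<Rightarrow> real list \<times> nat \<times> bool \<Rightarrow> real list" where
  "scan_finish addback s = (case s of (out, z, st) \<Rightarrow>
     if odd z then
       (let a = hd out; rest = rev (tl out) in
        if addback \<and> rest \<noteq> [] then (hd rest + a) # tl rest else rest)
     else rev out)"

lemma alg_next_eq_scan_finish:
  "alg_next addback xs = scan_finish addback (foldl scan_step ([], 0, False) (alg_y xs))"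
  unfolding alg_next_def scan_finish_def by (simp split: prod.split)

lemma scan_finish_II: "scan_finish False (out, z, st) = (if odd z then rev (tl out) else rev out)"
  by (simp add: scan_finish_def Let_def)

lemma foldl_scan_step_leading_zeros:
  "foldl scan_step ([], 0, False) (replicate k 0) = ([], 0, False)"
  by (induction k) (auto simp: scan_step_def)

lemma foldl_scan_step_zeros:
  "foldl scan_step (out, z, True) (replicate k 0) = (out, z + k, True)"
  by (induction k arbitrary: z) (auto simp: scan_step_def)

lemma scan_step_start: "e \<noteq> 0 \<Longrightarrow> scan_step ([], 0, False) e = ([e], 0, True)"
  by (simp add: scan_step_def)

lemma foldl_scan_step_leading:
  "e \<noteq> 0 \<Longrightarrow> foldl scan_step ([], 0, False) (replicate n 0 @ e # r) = foldl scan_step ([e], 0, True) r"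
  by (simp add: foldl_scan_step_leading_zeros scan_step_start)

lemma length_scan_finish_II:
  "out \<noteq> [] \<Longrightarrow> length (scan_finish False (foldl scan_step (out, z, True) ys)) + 2 * ceil_half_sum (zr z ys)
     = length out + z + length ys"
proof (induction ys arbitrary: out z)
  case (Cons e ys)
  consider "e = 0" | "e \<noteq> 0" "odd z" | "e \<noteq> 0" "even z" by blast
  then show ?case
  proof cases
    case 1
    then show ?thesis using Cons.IH[of out "Suc z"] Cons.prems by (simp add: scan_step_def)
  next
    case 2
    then have "zr z (e # ys) = z # zr 0 ys" by (simp add: odd_pos)
    then have "2 * ceil_half_sum (zr z (e # ys)) = z + 1 + 2 * ceil_half_sum (zr 0 ys)"
      using 2 by (simp add: ceil_half_sum_def)
    moreover have "scan_step (out, z, True) e = ((hd out + e) # tl out, 0, True)"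
      using 2 by (simp add: scan_step_def)
    ultimately show ?thesis using Cons.IH[of "(hd out + e) # tl out" 0] Cons.prems by simp
  next
    case 3
    then have "2 * ceil_half_sum (zr z (e # ys)) = z + 2 * ceil_half_sum (zr 0 ys)"
      by (cases "z = 0") (simp_all add: ceil_half_sum_def)
    moreover have "scan_step (out, z, True) e = (e # out, 0, True)"
      using 3 by (simp add: scan_step_def)
    ultimately show ?thesis using Cons.IH[of "e # out" 0] Cons.prems by simp
  qed
qed (auto simp: scan_finish_II ceil_half_sum_def)

subsection \<open>Prefix sums of the output of Algorithm II\<close>

definition prefix_alt_sums :: "real list \<Rightarrow> real set" where
  "prefix_alt_sums xs = (\<lambda>j. alt_sum (take j xs)) ` {..length xs}"

lemma prefix_alt_sums_snoc:
  "prefix_alt_sums (xs @ [a]) = insert (alt_sum (xs @ [a])) (prefix_alt_sums xs)"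
proof -
  have "(\<lambda>j. alt_sum (take j (xs @ [a]))) ` {..length xs} = prefix_alt_sums xs"
    unfolding prefix_alt_sums_def by (rule image_cong) auto
  then show ?thesis by (simp add: prefix_alt_sums_def atMost_Suc)
qed

lemma prefix_alt_sums_mono_snoc: "prefix_alt_sums xs \<subseteq> prefix_alt_sums (xs @ [a])"
  by (simp add: prefix_alt_sums_snoc subset_insertI)

lemma prefix_alt_sums_butlast: "prefix_alt_sums (butlast xs) \<subseteq> prefix_alt_sums xs"
  by (cases xs rule: rev_cases) (auto simp: prefix_alt_sums_snoc)

lemma prefix_alt_sums_replicate_zero:
  "even n \<Longrightarrow> prefix_alt_sums xs \<subseteq> prefix_alt_sums (replicate n 0 @ xs)"
proof
  fix s assume "even n" "s \<in> prefix_alt_sums xs"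
  then obtain j where "j \<le> length xs" "s = alt_sum (take j xs)"
    unfolding prefix_alt_sums_def by auto
  then have "n + j \<in> {..length (replicate n 0 @ xs)}"
    "s = alt_sum (take (n + j) (replicate n 0 @ xs))"
    using \<open>even n\<close> by (simp_all add: alt_sum_append)
  then show "s \<in> prefix_alt_sums (replicate n 0 @ xs)"
    unfolding prefix_alt_sums_def by (rule rev_image_eqI)
qed

lemma even_prefixes_nonneg_if_sums_subset:
  assumes "prefixes_nonneg ys" "prefix_alt_sums xs \<subseteq> prefix_alt_sums ys"
  shows "even_prefixes_nonneg xs"
  unfolding even_prefixes_nonneg_def
proof (intro allI impI)
  fix m assume "m \<le> length xs"
  then have "alt_sum (take m xs) \<in> prefix_alt_sums ys"
    using assms(2) unfolding prefix_alt_sums_def by auto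
  then show "alt_sum (take m xs) \<ge> 0"
    using assms(1) unfolding prefix_alt_sums_def prefixes_nonneg_def by auto
qed

text \<open>\<open>p\<close> is the input read so far, \<open>out\<close> the reversed output and \<open>z\<close> the length of the
  pending zero run; the parity clause keeps the signs of the alternating sums of \<open>p\<close> and of
  the output aligned.\<close>

definition scan_prefix_inv :: "real list \<Rightarrow> real list \<Rightarrow> nat \<Rightarrow> bool" where
  "scan_prefix_inv p out z \<longleftrightarrow> out \<noteq> [] \<and> even (length p + length out + z) \<and>
     alt_sum (rev out) = alt_sum p \<and> prefix_alt_sums (rev out) \<subseteq> prefix_alt_sums p"

lemma scan_prefix_inv_step:
  assumes "scan_prefix_inv p out z"
  shows "\<exists>out' z'. scan_step (out, z, True) e = (out', z', True) \<and> scan_prefix_inv (p @ [e]) out' z'"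
proof -
  have ne: "out \<noteq> []" and par: "even (length p + length out + z)"
    and alt: "alt_sum (rev out) = alt_sum p"
    and sums: "prefix_alt_sums (rev out) \<subseteq> prefix_alt_sums (p @ [e])"
    using assms prefix_alt_sums_mono_snoc unfolding scan_prefix_inv_def by blast+
  have last_sum: "alt_sum (p @ [e]) \<in> prefix_alt_sums (p @ [e])"
    by (simp add: prefix_alt_sums_snoc)
  consider "e = 0" | "e \<noteq> 0" "odd z" | "e \<noteq> 0" "even z" by blast
  then show ?thesis
  proof cases
    case 1
    then have "scan_prefix_inv (p @ [e]) out (Suc z)"
      using ne par alt sums by (simp add: scan_prefix_inv_def alt_sum_append)
    then show ?thesis using 1 by (simp add: scan_step_def)
  next
    case 2
    obtain h t where out: "out = h # t" using ne by (cases out) auto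
    have "alt_sum (rev t @ [h + e]) = alt_sum (p @ [e])"
      using alt par 2 out by (auto simp: alt_sum_append)
    moreover have "prefix_alt_sums (rev t) \<subseteq> prefix_alt_sums (p @ [e])"
      using sums prefix_alt_sums_mono_snoc[of "rev t" h] out by simp
    ultimately have "scan_prefix_inv (p @ [e]) ((h + e) # t) 0"
      using par 2 out last_sum by (simp add: scan_prefix_inv_def prefix_alt_sums_snoc)
    then show ?thesis using 2 out by (simp add: scan_step_def)
  next
    case 3
    have "alt_sum (rev out @ [e]) = alt_sum (p @ [e])"
      using alt par 3 by (simp add: alt_sum_append)
    then have "scan_prefix_inv (p @ [e]) (e # out) 0"
      using par 3 ne sums last_sum by (simp add: scan_prefix_inv_def prefix_alt_sums_snoc)
    then show ?thesis using 3 ne by (simp add: scan_step_def)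
  qed
qed

lemma scan_prefix_inv_foldl:
  "scan_prefix_inv p out z \<Longrightarrow>
   \<exists>out' z'. foldl scan_step (out, z, True) ys = (out', z', True) \<and> scan_prefix_inv (p @ ys) out' z'"
proof (induction ys arbitrary: p out z)
  case (Cons e ys)
  obtain out' z' where "scan_step (out, z, True) e = (out', z', True)" "scan_prefix_inv (p @ [e]) out' z'"
    using scan_prefix_inv_step[OF Cons.prems] by blast
  then show ?case using Cons.IH[of "p @ [e]" out' z'] by simp
qed simp

lemma prefix_alt_sums_scan_finish_II:
  "prefix_alt_sums (scan_finish False (foldl scan_step ([e], 0, True) r)) \<subseteq> prefix_alt_sums (e # r)"
proof -
  have "scan_prefix_inv [e] [e] 0"
    unfolding scan_prefix_inv_def by simp
  then obtain out z where fold: "foldl scan_step ([e], 0, True) r = (out, z, True)"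
    and sums: "prefix_alt_sums (rev out) \<subseteq> prefix_alt_sums (e # r)"
    using scan_prefix_inv_foldl[of "[e]" "[e]" 0 r] unfolding scan_prefix_inv_def by auto
  then show ?thesis
    using prefix_alt_sums_butlast[of "rev out"] by (auto simp: scan_finish_II)
qed

subsection \<open>Comparing the two algorithms\<close>

definition add_hd :: "real \<Rightarrow> real list \<Rightarrow> real list" where
  "add_hd d l = (case l of [] \<Rightarrow> [] | h # t \<Rightarrow> (h + d) # t)"

lemma add_hd_Nil [simp]: "add_hd d [] = []"
  and add_hd_Cons [simp]: "add_hd d (h # t) = (h + d) # t"
  and add_hd_0 [simp]: "add_hd 0 l = l"
  by (auto simp: add_hd_def split: list.split)

definition add_last :: "real \<Rightarrow> real list \<Rightarrow> real list" where
  "add_last d l = (if l = [] then [] else butlast l @ [last l + d])"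

lemma add_last_Cons: "add_last d (x # l) = (if l = [] then [x + d] else x # add_last d l)"
  by (simp add: add_last_def)

lemma add_last_snoc [simp]: "add_last d (l @ [a]) = l @ [a + d]"
  by (simp add: add_last_def)

lemma add_last_Nil [simp]: "add_last d [] = []"
  by (simp add: add_last_def)

lemma add_last_0 [simp]: "add_last 0 l = l"
  by (simp add: add_last_def)

lemma rev_add_last: "rev (add_last d l) = add_hd d (rev l)"
  by (cases l rule: rev_cases) (auto simp: add_last_def)

text \<open>The output of the scan is kept reversed, so its last element is the first entry of the
  new array.\<close>

definition scan_shifted :: "real list \<times> nat \<times> bool \<Rightarrow> real list \<times> nat \<times> bool \<Rightarrow> bool" where
  "scan_shifted sa sb \<longleftrightarrow> snd sa = snd sb \<and> (\<exists>d\<ge>0. fst sa = add_last d (fst sb)) \<and>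
     (\<forall>v\<in>set (fst sb). v \<ge> 0) \<and> (snd (snd sb) \<longleftrightarrow> fst sb \<noteq> []) \<and>
     (\<not> snd (snd sb) \<longrightarrow> fst (snd sb) = 0)"

lemma scan_shifted_start: "e > 0 \<Longrightarrow> d \<ge> 0 \<Longrightarrow> scan_shifted ([e + d], 0, True) ([e], 0, True)"
  unfolding scan_shifted_def by (auto simp: add_last_def)

lemma scan_shifted_step:
  assumes "scan_shifted sa sb" "e \<ge> 0"
  shows "scan_shifted (scan_step sa e) (scan_step sb e)"
proof -
  obtain oa ob z s where sa: "sa = (oa, z, s)" and sb: "sb = (ob, z, s)"
    using assms(1) unfolding scan_shifted_def by (cases sa, cases sb) auto
  obtain d where d: "d \<ge> 0" "oa = add_last d ob"
    and pos: "\<forall>v\<in>set ob. v \<ge> 0" and ne: "s \<longleftrightarrow> ob \<noteq> []" and nst: "\<not> s \<longrightarrow> z = 0"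
    using assms(1) unfolding scan_shifted_def sa sb by auto
  consider "e = 0" "s" | "e = 0" "\<not> s" | "e \<noteq> 0" "\<not> s" | h t where "e \<noteq> 0" "s" "ob = h # t"
    using ne by (cases ob) auto
  then show ?thesis
  proof cases
    case 1
    then show ?thesis using d pos ne unfolding sa sb scan_shifted_def scan_step_def by auto
  next
    case 2
    then have "scan_step sa e = ([], 0, False)" "scan_step sb e = ([], 0, False)"
      unfolding sa sb scan_step_def by auto
    then show ?thesis unfolding scan_shifted_def by (auto intro: exI[of _ 0])
  next
    case 3
    then have "scan_step sa e = ([e], 0, True)" "scan_step sb e = ([e], 0, True)"
      unfolding sa sb scan_step_def by auto
    then show ?thesis using assms(2) unfolding scan_shifted_def by (auto intro: exI[of _ 0])
  next
    case 4
    have "(hd oa + e) # tl oa = add_last d ((h + e) # t)" "e # oa = add_last d (e # ob)"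
      using d 4 by (auto simp: add_last_Cons)
    then show ?thesis using d pos assms(2) 4 unfolding sa sb scan_shifted_def scan_step_def by auto
  qed
qed

lemma scan_shifted_foldl:
  "\<forall>e\<in>set ys. e \<ge> 0 \<Longrightarrow> scan_shifted sa sb \<Longrightarrow>
   scan_shifted (foldl scan_step sa ys) (foldl scan_step sb ys)"
proof (induction ys arbitrary: sa sb)
  case (Cons e ys)
  then show ?case using scan_shifted_step[OF Cons.prems(2), of e] by simp
qed simp

lemma scan_finish_shifted:
  assumes "scan_shifted sa sb"
  shows "\<exists>d\<ge>0. scan_finish True sa = add_hd d (scan_finish False sb)"
proof -
  obtain oa ob z s where sa: "sa = (oa, z, s)" and sb: "sb = (ob, z, s)"
    using assms unfolding scan_shifted_def by (cases sa, cases sb) auto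
  obtain d where d: "d \<ge> 0" "oa = add_last d ob" and pos: "\<forall>v\<in>set ob. v \<ge> 0"
    using assms unfolding scan_shifted_def sa sb by auto
  consider "even z" | "odd z" "ob = []" | h where "odd z" "ob = [h]"
    | h t r0 where "odd z" "ob = h # t @ [r0]"
  proof (cases ob)
    case (Cons h t)
    then show ?thesis using that by (cases t rule: rev_cases) auto
  qed (use that in auto)
  then show ?thesis
  proof cases
    case 1
    then show ?thesis using d unfolding sa sb scan_finish_def by (auto simp: rev_add_last)
  next
    case (4 h t r0)
    have "oa = h # t @ [r0 + d]"
      using d 4 by (simp add: add_last_Cons)
    then have "scan_finish True sa = (r0 + d + h) # rev t"
      using 4 unfolding sa scan_finish_def by (simp add: Let_def)
    moreover have "scan_finish False sb = r0 # rev t" using 4 unfolding sb scan_finish_II by simp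
    moreover have "h \<ge> 0" using pos 4 by auto
    ultimately show ?thesis using d by (intro exI[of _ "d + h"]) (simp add: algebra_simps)
  qed (use d in \<open>auto simp: sa sb scan_finish_def add_last_Cons\<close>)
qed

lemma foldl_scan_step_add_hd_leading:
  assumes "e > 0" "d \<ge> 0" "even n"
  shows "foldl scan_step ([], 0, False) (add_hd d (replicate n 0 @ e # r))
       = foldl scan_step ([e + d], 0, True) r"
proof (cases "n = 0 \<or> d = 0")
  case True
  have "e + d \<noteq> 0" using assms by simp
  then show ?thesis using True assms foldl_scan_step_leading[of e n r] by (auto simp: scan_step_start)
next
  case False
  then obtain n' where "n = Suc n'" "odd n'" "d > 0" using assms by (cases n) auto
  then show ?thesis using assms
    by (simp add: scan_step_start foldl_scan_step_zeros) (simp add: scan_step_def add.commute)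
qed

lemma ceil_half_sum_zero_runs_add_hd_leading:
  assumes "e > 0" "d \<ge> 0" "even n"
  shows "ceil_half_sum (zero_runs (add_hd d (replicate n 0 @ e # r)))
       = ceil_half_sum (zero_runs (replicate n 0 @ e # r))"
proof (cases "n = 0 \<or> d = 0")
  case True
  then show ?thesis using assms by (auto simp: zero_runs_def)
next
  case False
  then obtain n' where "n = Suc n'" "odd n'" "d > 0" using assms by (cases n) auto
  then have "zero_runs (add_hd d (replicate n 0 @ e # r)) = n' # zr 0 r"
    using assms zr_replicate_zero[of 0 n' "e # r"] by (cases n') (auto simp: zero_runs_def)
  then show ?thesis
    using ceil_half_sum_zero_runs_leading[of n e r] assms \<open>n = Suc n'\<close> \<open>odd n'\<close>
    by (simp add: ceil_half_sum_def)
qed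

lemma scan_add_hd_all_zero:
  assumes "even n" "n > 0" "d \<ge> 0"
  shows "scan_finish b (foldl scan_step ([], 0, False) (add_hd d (replicate n 0))) = []
    \<and> ceil_half_sum (zero_runs (add_hd d (replicate n 0))) = n div 2"
proof (cases "d = 0")
  case True
  then show ?thesis using assms
    by (simp add: foldl_scan_step_leading_zeros scan_finish_def ceil_half_sum_zero_runs_all_zero)
next
  case False
  then obtain n' where n: "n = Suc n'" "odd n'" "d > 0" using assms by (cases n) auto
  then have "zero_runs (add_hd d (replicate n 0)) = [n']"
    using zr_replicate_zero[of 0 n' "[]"] by (cases n') (auto simp: zero_runs_def)
  then show ?thesis using n
    by (simp add: scan_step_start foldl_scan_step_zeros scan_finish_def ceil_half_sum_def)
qed

lemma alg_mu_add_hd: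
  assumes "even_prefixes_nonneg B" "length B \<ge> 2" "d \<ge> 0"
  shows "alg_mu (add_hd d B) = alg_mu B"
proof -
  obtain b0 b1 t where B: "B = b0 # b1 # t"
    using assms(2) by (cases B; cases "tl B") auto
  have "b1 \<le> b0" using assms(1) B even_prefixes_nonneg_Cons_Cons by blast
  then show ?thesis
    using assms(3) Min_set_Cons_Cons[of b1 b0 t] Min_set_Cons_Cons[of b1 "b0 + d" t]
    unfolding B alg_mu_def by simp
qed

lemma alg_y_add_hd:
  assumes "xs \<noteq> []" "even (length xs)" "even_prefixes_nonneg xs" "d \<ge> 0"
  shows "alg_y (add_hd d xs) = add_hd d (alg_y xs)"
  using alg_mu_add_hd[OF assms(3) length_ge_2_if_even[OF assms(1,2)] assms(4)]
  unfolding alg_y_def by (cases xs) auto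

lemma alg_next_II:
  assumes "B \<noteq> []" "even (length B)" "even_prefixes_nonneg B"
  shows "length (alg_next False B) + 2 * ceil_half_sum (zero_runs (alg_y B)) = length B
    \<and> even_prefixes_nonneg (alg_next False B)"
  using assms
proof (cases rule: alg_y_cases)
  case (all_zero n)
  moreover have "length B = n" using all_zero by (metis alg_y_def length_map length_replicate)
  ultimately show ?thesis
    using scan_add_hd_all_zero[of n 0 False]
    by (simp add: alg_next_eq_scan_finish even_prefixes_nonneg_def)
next
  case (leading n e r)
  let ?out = "scan_finish False (foldl scan_step ([e], 0, True) r)"
  have next_eq: "alg_next False B = ?out"
    using leading by (simp add: alg_next_eq_scan_finish foldl_scan_step_leading_zeros scan_step_start)
  have "length (alg_y B) = n + 1 + length r" using leading by simp
  then have "length ?out + 2 * ceil_half_sum (zero_runs (alg_y B)) = length B"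
    using length_scan_finish_II[of "[e]" 0 r] leading
    by (simp add: alg_y_def ceil_half_sum_zero_runs_leading)
  moreover have "prefix_alt_sums ?out \<subseteq> prefix_alt_sums (alg_y B)"
    by (rule subset_trans[OF prefix_alt_sums_scan_finish_II])
      (simp add: leading prefix_alt_sums_replicate_zero)
  then have "even_prefixes_nonneg ?out"
    by (rule even_prefixes_nonneg_if_sums_subset[OF prefixes_nonneg_alg_y[OF assms(1,3)]])
  ultimately show ?thesis using next_eq by simp
qed

lemma alg_next_add_hd:
  assumes "B \<noteq> []" "even (length B)" "even_prefixes_nonneg B" "d \<ge> 0"
  shows "ceil_half_sum (zero_runs (alg_y (add_hd d B))) = ceil_half_sum (zero_runs (alg_y B))
    \<and> (\<exists>d'\<ge>0. alg_next True (add_hd d B) = add_hd d' (alg_next False B))"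
proof -
  have y: "alg_y (add_hd d B) = add_hd d (alg_y B)"
    using alg_y_add_hd assms by blast
  from assms(1-3) show ?thesis
  proof (cases rule: alg_y_cases)
    case (all_zero n)
    then show ?thesis
      using scan_add_hd_all_zero[of n d True] scan_add_hd_all_zero[of n 0 False] assms(4)
      by (auto simp: y alg_next_eq_scan_finish intro!: exI[of _ "0::real"])
  next
    case (leading n e r)
    have "scan_shifted (foldl scan_step ([e + d], 0, True) r) (foldl scan_step ([e], 0, True) r)"
      using scan_shifted_foldl scan_shifted_start leading assms(4) by blast
    then show ?thesis
      using leading assms(4) scan_finish_shifted
      by (simp add: y alg_next_eq_scan_finish foldl_scan_step_add_hd_leading
          ceil_half_sum_zero_runs_add_hd_leading foldl_scan_step_leading_zeros scan_step_start)
  qed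
qed

definition alg_related :: "nat \<times> real list \<Rightarrow> nat \<times> real list \<Rightarrow> bool" where
  "alg_related sa sb \<longleftrightarrow> fst sa = fst sb \<and> length (snd sb) = 2 * fst sb \<and>
     even_prefixes_nonneg (snd sb) \<and> (\<exists>d\<ge>0. snd sa = add_hd d (snd sb))"

lemma alg_step_related:
  assumes "alg_related (NA, A) (NB, B)"
  shows "alg_mu A = alg_mu B \<and> alg_nu NA A = alg_nu NB B
    \<and> alg_related (alg_step True (NA, A)) (alg_step False (NB, B))"
proof (cases "B = []")
  case True
  then show ?thesis using assms
    by (auto simp: alg_related_def alg_step_def alg_nu_def alg_newN_def alg_next_def alg_y_def
        even_prefixes_nonneg_def intro!: exI[of _ 0])
next
  case False
  obtain d where d: "d \<ge> 0" "A = add_hd d B" and N: "NA = NB" "length B = 2 * NB"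
    and hw: "even_prefixes_nonneg B"
    using assms unfolding alg_related_def by auto
  have ev: "even (length B)" using N by simp
  have "alg_mu A = alg_mu B"
    using alg_mu_add_hd[OF hw length_ge_2_if_even[OF False ev] d(1)] d(2) by simp
  then show ?thesis
    using alg_next_II[OF False ev hw] alg_next_add_hd[OF False ev hw d(1)] d N
    by (auto simp: alg_related_def alg_step_def alg_nu_def alg_newN_eq)
qed

lemma alg_state_Suc: "alg_state b x (Suc k) = alg_step b (alg_state b x k)"
  by (simp add: alg_state_def)

lemma alg_states_related:
  assumes "length x = 2 * N" "highest_weight x"
  shows "alg_related (alg_state True x k) (alg_state False x k)"
proof (induction k)
  case 0
  then show ?case using assms even_prefixes_nonneg_if_highest_weight
    by (auto simp: alg_state_def alg_related_def intro!: exI[of _ 0])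
next
  case (Suc k)
  then show ?case using alg_step_related unfolding alg_state_Suc by (metis prod.collapse)
qed

lemma fst_alg_step_le: "length xs = 2 * N \<Longrightarrow> fst (alg_step b (N, xs)) \<le> N - 1"
  using alg_newN_le[of xs N] by (cases "xs = []") (auto simp: alg_step_def alg_newN_def)

lemma first_zero_exists:
  fixes f :: "nat \<Rightarrow> nat"
  assumes "f 0 \<noteq> 0" "\<And>k. f (Suc k) \<le> f k - 1"
  shows "\<exists>u\<ge>1. (\<forall>i\<in>{1..<u}. f i \<noteq> 0) \<and> f u = 0"
proof -
  have bound: "f k \<le> f 0 - k" for k
  proof (induction k)
    case (Suc k)
    then show ?case using assms(2)[of k] by linarith
  qed simp
  define u where "u = (LEAST k. f k = 0)"
  have "f u = 0"
    unfolding u_def by (rule LeastI[of _ "f 0"]) (use bound[of "f 0"] in simp)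
  moreover have "f i \<noteq> 0" if "i < u" for i
    using not_less_Least that unfolding u_def by blast
  moreover have "u \<noteq> 0" using \<open>f u = 0\<close> assms(1) by (cases u) auto
  ultimately show ?thesis by (intro exI[of _ u]) auto
qed

theorem mainTheorem8:
  fixes N :: nat and x :: "real list"
  assumes "N \<ge> 1" and "length x = 2 * N" and "\<forall>a\<in>set x. a > 0"
    and "highest_weight x"
  shows "\<exists>u. alg_stops_at True x u \<and> alg_stops_at False x u \<and>
           (\<forall>i\<in>{1..u}. alg_mu_seq True x i = alg_mu_seq False x i \<and>
                        alg_nu_seq True x i = alg_nu_seq False x i)"
proof -
  let ?N = "\<lambda>k. fst (alg_state False x k)"
  have related: "alg_related (alg_state True x k) (alg_state False x k)" for k
    using alg_states_related[OF assms(2,4)] .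
  then have same_N: "fst (alg_state True x k) = ?N k" for k
    by (simp add: alg_related_def)
  have "?N (Suc k) \<le> ?N k - 1" for k
    using related[of k] fst_alg_step_le[of "snd (alg_state False x k)" "?N k" False]
    by (simp add: alg_state_Suc alg_related_def)
  moreover have "?N 0 \<noteq> 0" using assms(1,2) by (simp add: alg_state_def)
  ultimately obtain u where u: "u \<ge> 1" "\<forall>i\<in>{1..<u}. ?N i \<noteq> 0" "?N u = 0"
    using first_zero_exists[of ?N] by blast
  have "alg_stops_at b x u" for b
    using u same_N unfolding alg_stops_at_def by (cases b) simp_all
  moreover have "alg_mu_seq True x i = alg_mu_seq False x i \<and> alg_nu_seq True x i = alg_nu_seq False x i"
    for i
  proof -
    obtain NA A NB B where "alg_state True x (i - 1) = (NA, A)" "alg_state False x (i - 1) = (NB, B)"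
      by fastforce
    then show ?thesis
      using alg_step_related related[of "i - 1"] by (simp add: alg_mu_seq_def alg_nu_seq_def)
  qed
  ultimately show ?thesis by blast
qed

end
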